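(* Let $\mathcal G=(V,E,r)$ be a graph. If $a\in\mathbf A(\mathcal G)$ and $\operatorname{supp}(a)$ is acyclic, then $\mathsf L(a)=\{l\}$ with $l=\sum_{v\in V}a(v)-\sum_{e\in E}a(e)$. In particular $|\mathsf L(a)|=1$.
   Context: A graph $\mathcal G=(V,E,r)$ consists of a finite vertex set $V$, a finite edge set $E$ disjoint from $V$, and a map $r$ assigning to each edge a two-element subset of $V$; multiple edges allowed, no loops. Acyclic means containing no cycle, where two edges with the same pair of endpoints form a cycle of length $2$. An agglomeration on $\mathcal G$ is a function $a\colon V\cup E\to\mathbb N_0$ with $a(v)\ge a(e)$ whenever $v$ is incident with $e$; $\mathbf A(\mathcal G)$ is the monoid of agglomerations under pointwise addition. $\operatorname{supp}(a)$ is the subgraph of vertices and edges where $a$ is positive. $\mathsf L(a)$ is the set of $n\in\mathbb N_0$ such that $a$ is a sum of $n$ atoms (nonzero elements not expressible as a sum of two nonzero elements), with $\mathsf L(0)=\{0\}$. *)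

theory Defs
  imports Main "HOL-Library.Function_Algebras"
begin

text \<open>A graph (V,E,r): finite disjoint vertex and edge sets, r maps each edge
  to a two-element set of vertices (multiple edges allowed, no loops).\<close>
definition is_graph :: "'a set \<Rightarrow> 'a set \<Rightarrow> ('a \<Rightarrow> 'a set) \<Rightarrow> bool" where
  "is_graph V E r \<longleftrightarrow> finite V \<and> finite E \<and> V \<inter> E = {} \<and>
     (\<forall>e\<in>E. r e \<subseteq> V \<and> card (r e) = 2)"

definition agglomerations :: "'a set \<Rightarrow> 'a set \<Rightarrow> ('a \<Rightarrow> 'a set) \<Rightarrow> ('a \<Rightarrow> nat) set" where
  "agglomerations V E r = {a. (\<forall>x. x \<notin> V \<union> E \<longrightarrow> a x = 0) \<and>
     (\<forall>e\<in>E. \<forall>v\<in>r e. a e \<le> a v)}"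

definition agg_atom :: "'a set \<Rightarrow> 'a set \<Rightarrow> ('a \<Rightarrow> 'a set) \<Rightarrow> ('a \<Rightarrow> nat) \<Rightarrow> bool" where
  "agg_atom V E r u \<longleftrightarrow> u \<in> agglomerations V E r \<and> u \<noteq> 0 \<and>
     \<not> (\<exists>b\<in>agglomerations V E r. \<exists>c\<in>agglomerations V E r. b \<noteq> 0 \<and> c \<noteq> 0 \<and> u = b + c)"

definition agg_lengths :: "'a set \<Rightarrow> 'a set \<Rightarrow> ('a \<Rightarrow> 'a set) \<Rightarrow> ('a \<Rightarrow> nat) \<Rightarrow> nat set" where
  "agg_lengths V E r a = {n. \<exists>f :: nat \<Rightarrow> 'a \<Rightarrow> nat.
     (\<forall>i<n. agg_atom V E r (f i)) \<and> a = (\<Sum>i<n. f i)}"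

text \<open>supp(a) contains a cycle: k \<ge> 2 distinct vertices v_0..v_{k-1} and k distinct
  edges e_0..e_{k-1} of the support with r e_i = {v_i, v_{(i+1) mod k}}.
  (For k = 2 this is a pair of parallel edges.)\<close>
definition supp_has_cycle :: "'a set \<Rightarrow> 'a set \<Rightarrow> ('a \<Rightarrow> 'a set) \<Rightarrow> ('a \<Rightarrow> nat) \<Rightarrow> bool" where
  "supp_has_cycle V E r a \<longleftrightarrow> (\<exists>vs es. length vs = length es \<and> length vs \<ge> 2 \<and>
     distinct vs \<and> distinct es \<and> set vs \<subseteq> V \<and> set es \<subseteq> E \<and>
     (\<forall>v\<in>set vs. a v > 0) \<and> (\<forall>e\<in>set es. a e > 0) \<and>
     (\<forall>i<length es. r (es ! i) = {vs ! i, vs ! ((i + 1) mod length vs)}))"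

definition supp_acyclic :: "'a set \<Rightarrow> 'a set \<Rightarrow> ('a \<Rightarrow> 'a set) \<Rightarrow> ('a \<Rightarrow> nat) \<Rightarrow> bool" where
  "supp_acyclic V E r a \<longleftrightarrow> \<not> supp_has_cycle V E r a"

end

theory Submission
  imports Defs
begin

text \<open>The quantity \<open>\<chi>(b) = \<Sum>\<^sub>v b(v) - \<Sum>\<^sub>e b(e)\<close> is additive, so it suffices to show
  that \<open>\<chi>(u) = 1\<close> for every atom \<open>u\<close> with acyclic support. If \<open>supp(b)\<close> is a nonempty forest
  then \<open>\<chi>(b) \<ge> 1\<close>, and if \<open>\<chi>(b) \<ge> 2\<close> then \<open>b\<close> splits into two nonzero agglomerations.
  Both follow by induction on the number of edges of the support: without edges, split off a
  single vertex; otherwise remove a pendant edge \<open>e\<close> at a leaf \<open>v\<close> together with \<open>b(e)\<close> units of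
  \<open>v\<close>, which leaves \<open>\<chi>\<close> unchanged, split the rest, and distribute \<open>e\<close> among the two parts as
  far as its other endpoint allows. Factorisations exist since the total mass decreases.\<close>

lemma agglomerations_zero_outside:
  "b \<in> agglomerations V E r \<Longrightarrow> x \<notin> V \<union> E \<Longrightarrow> b x = 0"
  by (simp add: agglomerations_def)

lemma agglomerations_edge_le:
  "b \<in> agglomerations V E r \<Longrightarrow> e \<in> E \<Longrightarrow> v \<in> r e \<Longrightarrow> b e \<le> b v"
  by (simp add: agglomerations_def)

lemma is_graph_endpoint:
  assumes "is_graph V E r" and "e \<in> E" and "v \<in> r e"
  shows "v \<in> V" and "v \<notin> E"
  using assms unfolding is_graph_def by blast+

lemma is_graph_edge_ends:
  assumes "is_graph V E r" and "e \<in> E"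
  obtains v w where "r e = {v, w}" and "v \<noteq> w" and "v \<in> V" and "w \<in> V"
  using assms by (auto simp: is_graph_def card_2_iff)

lemma is_graph_edge_other_end:
  assumes "is_graph V E r" and "e \<in> E" and "v \<in> r e"
  obtains w where "r e = {v, w}" and "w \<noteq> v" and "v \<in> V" and "w \<in> V"
proof -
  obtain x y where "r e = {x, y}" "x \<noteq> y" "x \<in> V" "y \<in> V"
    using is_graph_edge_ends[OF assms(1,2)] .
  with assms(3) that show thesis
    by (cases "v = x") (auto simp: insert_commute)
qed

lemma supp_acyclic_antimono:
  assumes "b \<le> a" and "supp_acyclic V E r a"
  shows "supp_acyclic V E r b"
proof -
  have "0 < a x" if "0 < b x" for x
    using that assms(1) by (simp add: le_fun_def less_le_trans)
  then show ?thesis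
    using assms(2) unfolding supp_acyclic_def supp_has_cycle_def by blast
qed

definition supp_path ::
    "'a set \<Rightarrow> 'a set \<Rightarrow> ('a \<Rightarrow> 'a set) \<Rightarrow> ('a \<Rightarrow> nat) \<Rightarrow> 'a list \<Rightarrow> 'a list \<Rightarrow> bool" where
  "supp_path V E r b vs es \<longleftrightarrow> length vs = Suc (length es) \<and>
     distinct vs \<and> distinct es \<and> set vs \<subseteq> V \<and> set es \<subseteq> E \<and>
     (\<forall>v\<in>set vs. 0 < b v) \<and> (\<forall>e\<in>set es. 0 < b e) \<and>
     (\<forall>i<length es. r (es ! i) = {vs ! i, vs ! Suc i})"

definition pendant_edge :: "'a set \<Rightarrow> ('a \<Rightarrow> 'a set) \<Rightarrow> ('a \<Rightarrow> nat) \<Rightarrow> 'a \<Rightarrow> 'a \<Rightarrow> bool" where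
  "pendant_edge E r b v e \<longleftrightarrow> e \<in> E \<and> 0 < b e \<and> v \<in> r e \<and>
     (\<forall>f\<in>E. 0 < b f \<and> v \<in> r f \<longrightarrow> f = e)"

lemma supp_path_start_edge:
  assumes "supp_path V E r b vs es" and "i < length es" and "vs ! 0 \<in> r (es ! i)"
  shows "i = 0"
proof -
  have "vs ! 0 = vs ! i \<or> vs ! 0 = vs ! Suc i"
    using assms unfolding supp_path_def by auto
  then show ?thesis
    using assms unfolding supp_path_def by (auto simp: nth_eq_iff_index_eq)
qed

lemma supp_path_Cons:
  assumes "supp_path V E r b vs es" and "f \<in> E" and "0 < b f" and "f \<notin> set es"
    and "r f = {z, vs ! 0}" and "z \<notin> set vs" and "z \<in> V" and "0 < b z"
  shows "supp_path V E r b (z # vs) (f # es)"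
  unfolding supp_path_def
proof (intro conjI allI impI)
  fix i assume "i < length (f # es)"
  then show "r ((f # es) ! i) = {(z # vs) ! i, (z # vs) ! Suc i}"
    using assms unfolding supp_path_def by (cases i) auto
qed (use assms in \<open>auto simp: supp_path_def\<close>)

lemma supp_path_close_cycle:
  assumes path: "supp_path V E r b vs es" and "f \<in> E" and "0 < b f" and "f \<notin> set es"
    and rf: "r f = {vs ! 0, vs ! j}" and "0 < j" and "j < length vs"
  shows "supp_has_cycle V E r b"
  unfolding supp_has_cycle_def
proof (intro exI conjI)
  let ?vs = "take (Suc j) vs" and ?es = "take j es @ [f]"
  have lens: "length ?vs = Suc j" "length ?es = Suc j"
    using assms unfolding supp_path_def by auto
  show "length ?vs = length ?es" "2 \<le> length ?vs"
    using lens \<open>0 < j\<close> by auto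
  show "distinct ?vs" "distinct ?es" "set ?vs \<subseteq> V" "set ?es \<subseteq> E"
    "\<forall>v\<in>set ?vs. 0 < b v" "\<forall>e\<in>set ?es. 0 < b e"
    using assms unfolding supp_path_def by (auto dest: in_set_takeD)
  show "\<forall>i<length ?es. r (?es ! i) = {?vs ! i, ?vs ! ((i + 1) mod length ?vs)}"
  proof (intro allI impI)
    fix i assume "i < length ?es"
    then consider "i < j" | "i = j" using lens by linarith
    then show "r (?es ! i) = {?vs ! i, ?vs ! ((i + 1) mod length ?vs)}"
    proof cases
      case 1
      then show ?thesis
        using path lens unfolding supp_path_def by (auto simp: nth_append)
    next
      case 2
      then show ?thesis
        using path lens rf unfolding supp_path_def by (auto simp: nth_append)
    qed
  qed
qed

text \<open>A longest path argument: a second support edge at the start of the path either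
  extends it or closes a cycle.\<close>

lemma supp_path_pendant_edge:
  assumes G: "is_graph V E r" and A: "b \<in> agglomerations V E r" and C: "supp_acyclic V E r b"
  shows "supp_path V E r b vs es \<Longrightarrow> es \<noteq> [] \<Longrightarrow> \<exists>v e. pendant_edge E r b v e"
proof (induction "card V - length vs" arbitrary: vs es rule: less_induct)
  case less
  let ?t = "vs ! 0"
  have "es ! 0 \<in> E" "0 < b (es ! 0)" "?t \<in> r (es ! 0)"
    using less.prems unfolding supp_path_def by auto
  show ?case
  proof (cases "pendant_edge E r b ?t (es ! 0)")
    case True
    then show ?thesis by blast
  next
    case False
    then obtain f where f: "f \<in> E" "0 < b f" "?t \<in> r f" "f \<noteq> es ! 0"
      using \<open>es ! 0 \<in> E\<close> \<open>0 < b (es ! 0)\<close> \<open>?t \<in> r (es ! 0)\<close>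
      unfolding pendant_edge_def by blast
    obtain z where rf: "r f = {?t, z}" and "z \<noteq> ?t" and "z \<in> V"
      using is_graph_edge_other_end[OF G f(1,3)] by blast
    have "0 < b z"
      using agglomerations_edge_le[OF A f(1), of z] rf f(2) by auto
    have "f \<notin> set es"
    proof
      assume "f \<in> set es"
      then obtain i where "i < length es" and "es ! i = f"
        by (auto simp: in_set_conv_nth)
      then show False
        using supp_path_start_edge[OF less.prems(1)] f by auto
    qed
    show ?thesis
    proof (cases "z \<in> set vs")
      case True
      then obtain j where "j < length vs" and "vs ! j = z"
        by (auto simp: in_set_conv_nth)
      moreover have "0 < j"
        using calculation \<open>z \<noteq> ?t\<close> by (cases j) auto
      ultimately have "supp_has_cycle V E r b"
        using supp_path_close_cycle[OF less.prems(1) f(1,2) \<open>f \<notin> set es\<close>, of j] rf by auto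
      then show ?thesis
        using C unfolding supp_acyclic_def by blast
    next
      case False
      have path: "supp_path V E r b (z # vs) (f # es)"
        using supp_path_Cons[OF less.prems(1) f(1,2) \<open>f \<notin> set es\<close>, of z] rf False
          \<open>z \<in> V\<close> \<open>0 < b z\<close> by (simp add: insert_commute)
      have "finite V"
        using G by (simp add: is_graph_def)
      then have "length (z # vs) \<le> card V"
        using path unfolding supp_path_def by (metis card_mono distinct_card)
      then have "card V - length (z # vs) < card V - length vs"
        by simp
      then show ?thesis
        using less.hyps path by blast
    qed
  qed
qed

lemma supp_acyclic_pendant_edge:
  assumes G: "is_graph V E r" and A: "b \<in> agglomerations V E r" and C: "supp_acyclic V E r b"
    and "e \<in> E" and "0 < b e"
  obtains v f where "pendant_edge E r b v f"
proof -
  obtain x y where xy: "r e = {x, y}" "x \<noteq> y" "x \<in> V" "y \<in> V"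
    using is_graph_edge_ends[OF G \<open>e \<in> E\<close>] .
  have "b e \<le> b x" "b e \<le> b y"
    using agglomerations_edge_le[OF A \<open>e \<in> E\<close>] xy by auto
  with \<open>0 < b e\<close> have "0 < b x" "0 < b y"
    by auto
  then have "supp_path V E r b [x, y] [e]"
    using xy \<open>e \<in> E\<close> \<open>0 < b e\<close> unfolding supp_path_def by auto
  then show thesis
    using supp_path_pendant_edge[OF G A C] that by blast
qed

text \<open>On the indicator function of a subgraph this is its Euler characteristic \<open>|V'| - |E'|\<close>.\<close>

definition euler_char :: "'a set \<Rightarrow> 'a set \<Rightarrow> ('a \<Rightarrow> nat) \<Rightarrow> int" where
  "euler_char V E b = (\<Sum>v\<in>V. int (b v)) - (\<Sum>e\<in>E. int (b e))"

lemma euler_char_add: "euler_char V E (b + c) = euler_char V E b + euler_char V E c"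
  by (simp add: euler_char_def sum.distrib)

lemma euler_char_sum: "euler_char V E (\<Sum>i\<in>I. f i) = (\<Sum>i\<in>I. euler_char V E (f i))"
proof -
  have "euler_char V E 0 = 0"
    by (simp add: euler_char_def)
  then show ?thesis
    using sum_comp_morphism[of "euler_char V E" f I] by (simp add: euler_char_add comp_def)
qed

definition pendant_part :: "'a \<Rightarrow> 'a \<Rightarrow> nat \<Rightarrow> 'a \<Rightarrow> nat" where
  "pendant_part v e k = (\<lambda>x. if x = v \<or> x = e then k else 0)"

lemma pendant_part_add: "pendant_part v e (k + l) = pendant_part v e k + pendant_part v e l"
  by (auto simp: pendant_part_def)

lemma euler_char_pendant_part:
  assumes G: "is_graph V E r" and "v \<in> V" and "e \<in> E"
  shows "euler_char V E (pendant_part v e k) = 0"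
proof -
  have "finite V" "finite E" "v \<notin> E" "e \<notin> V"
    using G assms by (auto simp: is_graph_def)
  have "(\<Sum>x\<in>V. int (pendant_part v e k x)) = (\<Sum>x\<in>V. if x = v then int k else 0)"
    using \<open>e \<notin> V\<close> by (intro sum.cong) (auto simp: pendant_part_def)
  moreover have "(\<Sum>x\<in>E. int (pendant_part v e k x)) = (\<Sum>x\<in>E. if x = e then int k else 0)"
    using \<open>v \<notin> E\<close> by (intro sum.cong) (auto simp: pendant_part_def)
  ultimately show ?thesis
    using \<open>finite V\<close> \<open>finite E\<close> assms by (simp add: euler_char_def)
qed

lemma agglomerations_add_pendant_part:
  assumes G: "is_graph V E r" and c: "c \<in> agglomerations V E r"
    and "e \<in> E" and re: "r e = {v, w}" and "w \<noteq> v" and "c e = 0" and "k \<le> c w"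
  shows "c + pendant_part v e k \<in> agglomerations V E r"
  unfolding agglomerations_def
proof (intro CollectI conjI allI impI ballI)
  have "v \<in> V" "v \<notin> E" "w \<notin> E"
    using is_graph_endpoint[OF G \<open>e \<in> E\<close>] re by auto
  fix f u assume "f \<in> E" and "u \<in> r f"
  show "(c + pendant_part v e k) f \<le> (c + pendant_part v e k) u"
  proof (cases "f = e")
    case True
    then show ?thesis
      using \<open>u \<in> r f\<close> re \<open>w \<noteq> v\<close> \<open>w \<notin> E\<close> \<open>c e = 0\<close> \<open>k \<le> c w\<close>
      by (auto simp: pendant_part_def)
  next
    case False
    then show ?thesis
      using \<open>f \<in> E\<close> \<open>v \<notin> E\<close> agglomerations_edge_le[OF c \<open>f \<in> E\<close> \<open>u \<in> r f\<close>]
      by (auto simp: pendant_part_def)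
  qed
next
  fix x assume "x \<notin> V \<union> E"
  then show "(c + pendant_part v e k) x = 0"
    using agglomerations_zero_outside[OF c] is_graph_endpoint[OF G \<open>e \<in> E\<close>] \<open>e \<in> E\<close> re
    by (auto simp: pendant_part_def)
qed

lemma agglomerations_prune_pendant_edge:
  assumes G: "is_graph V E r" and A: "b \<in> agglomerations V E r" and "pendant_edge E r b v e"
  shows "b(v := b v - b e, e := 0) \<in> agglomerations V E r"
  unfolding agglomerations_def
proof (intro CollectI conjI allI impI ballI)
  have "e \<in> E" "v \<in> r e"
    using assms by (auto simp: pendant_edge_def)
  then have "v \<notin> E"
    using is_graph_endpoint[OF G] by blast
  fix f u assume "f \<in> E" and "u \<in> r f"
  then have "u \<noteq> e"
    using is_graph_endpoint[OF G] \<open>e \<in> E\<close> by blast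
  show "(b(v := b v - b e, e := 0)) f \<le> (b(v := b v - b e, e := 0)) u"
  proof (cases "f = e \<or> u \<noteq> v")
    case True
    then show ?thesis
      using \<open>u \<noteq> e\<close> \<open>f \<in> E\<close> \<open>v \<notin> E\<close> agglomerations_edge_le[OF A \<open>f \<in> E\<close> \<open>u \<in> r f\<close>]
      by auto
  next
    case False
    then have "b f = 0"
      using \<open>pendant_edge E r b v e\<close> \<open>f \<in> E\<close> \<open>u \<in> r f\<close> by (auto simp: pendant_edge_def)
    then show ?thesis
      using \<open>f \<in> E\<close> \<open>v \<notin> E\<close> by auto
  qed
next
  fix x assume "x \<notin> V \<union> E"
  then show "(b(v := b v - b e, e := 0)) x = 0"
    using agglomerations_zero_outside[OF A] is_graph_endpoint[OF G] assms
    by (auto simp: pendant_edge_def)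
qed

definition agg_decomposable :: "'a set \<Rightarrow> 'a set \<Rightarrow> ('a \<Rightarrow> 'a set) \<Rightarrow> ('a \<Rightarrow> nat) \<Rightarrow> bool" where
  "agg_decomposable V E r b \<longleftrightarrow>
     (\<exists>c\<in>agglomerations V E r. \<exists>d\<in>agglomerations V E r. c \<noteq> 0 \<and> d \<noteq> 0 \<and> b = c + d)"

lemma agg_decomposable_add_pendant_part:
  assumes G: "is_graph V E r" and "e \<in> E" and re: "r e = {v, w}" and "w \<noteq> v"
    and "agg_decomposable V E r b" and "b e = 0" and "k \<le> b w"
  shows "agg_decomposable V E r (b + pendant_part v e k)"
proof -
  obtain c d where c: "c \<in> agglomerations V E r" and d: "d \<in> agglomerations V E r"
    and "c \<noteq> 0" and "d \<noteq> 0" and b: "b = c + d"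
    using \<open>agg_decomposable V E r b\<close> unfolding agg_decomposable_def by blast
  \<comment> \<open>\<open>k \<le> c w + d w\<close>, so whatever of \<open>k\<close> does not fit under \<open>c w\<close> fits under \<open>d w\<close>\<close>
  define m where "m = min k (c w)"
  have "c e = 0" "d e = 0" "k - m \<le> d w"
    using \<open>b e = 0\<close> \<open>k \<le> b w\<close> b unfolding m_def by auto
  then have "c + pendant_part v e m \<in> agglomerations V E r"
    and "d + pendant_part v e (k - m) \<in> agglomerations V E r"
    using agglomerations_add_pendant_part[OF G _ \<open>e \<in> E\<close> re \<open>w \<noteq> v\<close>] c d unfolding m_def by auto
  moreover have "c + pendant_part v e m \<noteq> 0" "d + pendant_part v e (k - m) \<noteq> 0"
    using \<open>c \<noteq> 0\<close> \<open>d \<noteq> 0\<close> by (auto simp: fun_eq_iff)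
  moreover have "b + pendant_part v e k = (c + pendant_part v e m) + (d + pendant_part v e (k - m))"
    using b pendant_part_add[of v e m "k - m"] unfolding m_def by (simp add: ac_simps)
  ultimately show ?thesis
    unfolding agg_decomposable_def by blast
qed

lemma pendant_edge_reduction:
  assumes G: "is_graph V E r" and A: "b \<in> agglomerations V E r" and C: "supp_acyclic V E r b"
    and "e0 \<in> E" and "0 < b e0"
  obtains b' where "b' \<in> agglomerations V E r" and "b' \<noteq> 0" and "b' \<le> b"
    and "euler_char V E b' = euler_char V E b"
    and "card {e\<in>E. 0 < b' e} < card {e\<in>E. 0 < b e}"
    and "agg_decomposable V E r b' \<longrightarrow> agg_decomposable V E r b"
proof -
  obtain v e where pe: "pendant_edge E r b v e"
    using supp_acyclic_pendant_edge[OF G A C \<open>e0 \<in> E\<close> \<open>0 < b e0\<close>] .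
  then have "e \<in> E" "0 < b e" "v \<in> r e"
    by (simp_all add: pendant_edge_def)
  obtain w where re: "r e = {v, w}" and "w \<noteq> v" and "v \<in> V"
    using is_graph_edge_other_end[OF G \<open>e \<in> E\<close> \<open>v \<in> r e\<close>] .
  have "v \<noteq> e" "w \<noteq> e"
    using is_graph_endpoint[OF G \<open>e \<in> E\<close>] re \<open>e \<in> E\<close> by auto
  have "b e \<le> b v" "b e \<le> b w"
    using agglomerations_edge_le[OF A \<open>e \<in> E\<close>] re by auto
  define b' where "b' = b(v := b v - b e, e := 0)"
  have b: "b' + pendant_part v e (b e) = b"
    using \<open>b e \<le> b v\<close> \<open>v \<noteq> e\<close> unfolding b'_def pendant_part_def by (auto simp: fun_eq_iff)
  have "b' w = b w" "b' e = 0"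
    using \<open>w \<noteq> v\<close> \<open>w \<noteq> e\<close> unfolding b'_def by auto
  show thesis
  proof
    show "b' \<in> agglomerations V E r"
      unfolding b'_def using agglomerations_prune_pendant_edge[OF G A pe] .
    show "b' \<noteq> 0"
    proof
      assume "b' = 0"
      then show False
        using \<open>b' w = b w\<close> \<open>b e \<le> b w\<close> \<open>0 < b e\<close> by simp
    qed
    show "b' \<le> b"
      unfolding b'_def by (simp add: le_fun_def)
    show "euler_char V E b' = euler_char V E b"
      using euler_char_add[of V E b' "pendant_part v e (b e)"]
        euler_char_pendant_part[OF G \<open>v \<in> V\<close> \<open>e \<in> E\<close>]
      by (simp add: b)
    have "finite E"
      using G by (simp add: is_graph_def)
    moreover have "{f\<in>E. 0 < b' f} \<subset> {f\<in>E. 0 < b f}"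
      using \<open>b' e = 0\<close> \<open>e \<in> E\<close> \<open>0 < b e\<close> unfolding b'_def by auto
    ultimately show "card {f\<in>E. 0 < b' f} < card {f\<in>E. 0 < b f}"
      by (simp add: psubset_card_mono)
    show "agg_decomposable V E r b' \<longrightarrow> agg_decomposable V E r b"
      using agg_decomposable_add_pendant_part[OF G \<open>e \<in> E\<close> re \<open>w \<noteq> v\<close>, of b' "b e"]
        \<open>b' e = 0\<close> \<open>b' w = b w\<close> \<open>b e \<le> b w\<close> by (simp add: b)
  qed
qed

lemma euler_char_edgeless:
  "\<forall>e\<in>E. b e = 0 \<Longrightarrow> euler_char V E b = (\<Sum>v\<in>V. int (b v))"
  by (simp add: euler_char_def)

lemma euler_char_pos_if_supp_acyclic:
  assumes G: "is_graph V E r"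
  shows "b \<in> agglomerations V E r \<Longrightarrow> b \<noteq> 0 \<Longrightarrow> supp_acyclic V E r b \<Longrightarrow> 0 < euler_char V E b"
proof (induction "card {e\<in>E. 0 < b e}" arbitrary: b rule: less_induct)
  case less
  show ?case
  proof (cases "\<exists>e\<in>E. 0 < b e")
    case True
    then obtain e where "e \<in> E" "0 < b e" ..
    obtain b' where "b' \<in> agglomerations V E r" "b' \<noteq> 0" "b' \<le> b"
      and "euler_char V E b' = euler_char V E b" and "card {e\<in>E. 0 < b' e} < card {e\<in>E. 0 < b e}"
      using pendant_edge_reduction[OF G less.prems(1,3) \<open>e \<in> E\<close> \<open>0 < b e\<close>] .
    moreover have "supp_acyclic V E r b'"
      using supp_acyclic_antimono[OF \<open>b' \<le> b\<close> less.prems(3)] .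
    ultimately have "0 < euler_char V E b'"
      using less.hyps by blast
    with \<open>euler_char V E b' = euler_char V E b\<close> show ?thesis
      by simp
  next
    case False
    obtain x where "b x \<noteq> 0"
      using less.prems(2) by (auto simp: fun_eq_iff)
    then have "x \<in> V"
      using False agglomerations_zero_outside[OF less.prems(1), of x] by force
    have "finite V"
      using G by (simp add: is_graph_def)
    then have "int (b x) \<le> (\<Sum>v\<in>V. int (b v))"
      using \<open>x \<in> V\<close> by (intro member_le_sum) auto
    then show ?thesis
      using False \<open>b x \<noteq> 0\<close> euler_char_edgeless[of E b V] by simp
  qed
qed

lemma agg_decomposable_edgeless:
  assumes G: "is_graph V E r" and A: "b \<in> agglomerations V E r" and edgeless: "\<forall>e\<in>E. b e = 0"
    and "2 \<le> euler_char V E b"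
  shows "agg_decomposable V E r b"
proof -
  have "(\<Sum>v\<in>V. int (b v)) \<noteq> 0"
    using \<open>2 \<le> euler_char V E b\<close> euler_char_edgeless[OF edgeless] by simp
  then obtain x where "x \<in> V" and "0 < b x"
    using sum.neutral[of V "\<lambda>v. int (b v)"] by fastforce
  then have "x \<notin> E"
    using G by (auto simp: is_graph_def)
  define c :: "'a \<Rightarrow> nat" where "c = (\<lambda>_. 0)(x := 1)"
  define d where "d = b(x := b x - 1)"
  have "c \<in> agglomerations V E r" "d \<in> agglomerations V E r"
    using A edgeless \<open>x \<in> V\<close> \<open>x \<notin> E\<close> unfolding c_def d_def agglomerations_def by auto
  moreover have "b = c + d"
    using \<open>0 < b x\<close> unfolding c_def d_def by (auto simp: fun_eq_iff)
  moreover have "c \<noteq> 0"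
    unfolding c_def by (auto simp: fun_eq_iff)
  moreover have "d \<noteq> 0"
  proof
    assume "d = 0"
    then have "euler_char V E b = euler_char V E c"
      using \<open>b = c + d\<close> by simp
    also have "\<dots> = 1"
      using G \<open>x \<in> V\<close> \<open>x \<notin> E\<close> unfolding c_def
      by (simp add: euler_char_def is_graph_def if_distrib[of int] sum.delta cong: if_cong)
    finally show False
      using \<open>2 \<le> euler_char V E b\<close> by simp
  qed
  ultimately show ?thesis
    unfolding agg_decomposable_def by blast
qed

lemma agg_decomposable_if_euler_char_ge_2:
  assumes G: "is_graph V E r"
  shows "b \<in> agglomerations V E r \<Longrightarrow> supp_acyclic V E r b \<Longrightarrow> 2 \<le> euler_char V E b \<Longrightarrow>
    agg_decomposable V E r b"
proof (induction "card {e\<in>E. 0 < b e}" arbitrary: b rule: less_induct)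
  case less
  show ?case
  proof (cases "\<exists>e\<in>E. 0 < b e")
    case True
    then obtain e where "e \<in> E" "0 < b e" ..
    obtain b' where "b' \<in> agglomerations V E r" "b' \<noteq> 0" "b' \<le> b"
      and "euler_char V E b' = euler_char V E b" and "card {e\<in>E. 0 < b' e} < card {e\<in>E. 0 < b e}"
      and "agg_decomposable V E r b' \<longrightarrow> agg_decomposable V E r b"
      using pendant_edge_reduction[OF G less.prems(1,2) \<open>e \<in> E\<close> \<open>0 < b e\<close>] .
    moreover have "supp_acyclic V E r b'"
      using supp_acyclic_antimono[OF \<open>b' \<le> b\<close> less.prems(2)] .
    ultimately show ?thesis
      using less.hyps less.prems(3) by auto
  next
    case False
    then show ?thesis
      using agg_decomposable_edgeless[OF G less.prems(1)] less.prems(3) by auto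
  qed
qed

lemma agg_atom_iff_not_decomposable:
  "agg_atom V E r u \<longleftrightarrow> u \<in> agglomerations V E r \<and> u \<noteq> 0 \<and> \<not> agg_decomposable V E r u"
  unfolding agg_atom_def agg_decomposable_def by blast

lemma euler_char_agg_atom:
  assumes G: "is_graph V E r" and "agg_atom V E r u" and "supp_acyclic V E r u"
  shows "euler_char V E u = 1"
  using euler_char_pos_if_supp_acyclic[OF G] agg_decomposable_if_euler_char_ge_2[OF G] assms(2,3)
  unfolding agg_atom_iff_not_decomposable by fastforce

lemma agg_lengths_euler_char:
  assumes G: "is_graph V E r" and "supp_acyclic V E r a" and "n \<in> agg_lengths V E r a"
  shows "int n = euler_char V E a"
proof -
  obtain f where atoms: "\<forall>i<n. agg_atom V E r (f i)" and a: "a = (\<Sum>i<n. f i)"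
    using \<open>n \<in> agg_lengths V E r a\<close> unfolding agg_lengths_def by blast
  have "euler_char V E (f i) = 1" if "i < n" for i
  proof -
    have "f i \<le> a"
      unfolding a using that by (intro member_le_sum) auto
    then have "supp_acyclic V E r (f i)"
      using supp_acyclic_antimono \<open>supp_acyclic V E r a\<close> by blast
    then show ?thesis
      using euler_char_agg_atom[OF G] atoms that by blast
  qed
  then show ?thesis
    unfolding a euler_char_sum by simp
qed

lemma agg_lengths_add:
  assumes "m \<in> agg_lengths V E r b" and "n \<in> agg_lengths V E r c"
  shows "m + n \<in> agg_lengths V E r (b + c)"
proof -
  obtain f g where "\<forall>i<m. agg_atom V E r (f i)" "b = (\<Sum>i<m. f i)"
    and "\<forall>i<n. agg_atom V E r (g i)" "c = (\<Sum>i<n. g i)"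
    using assms unfolding agg_lengths_def by blast
  moreover define h where "h i = (if i < m then f i else g (i - m))" for i
  moreover have "(\<Sum>i<m + n. h i) = (\<Sum>i<m. h i) + (\<Sum>i<n. h (i + m))"
    by (induction n) (simp_all add: ac_simps)
  ultimately show ?thesis
    unfolding agg_lengths_def by (intro CollectI exI[of _ h]) auto
qed

lemma agg_lengths_nonempty:
  assumes G: "is_graph V E r"
  shows "a \<in> agglomerations V E r \<Longrightarrow> agg_lengths V E r a \<noteq> {}"
proof (induction "\<Sum>x\<in>V \<union> E. a x" arbitrary: a rule: less_induct)
  case less
  consider "a = 0" | "agg_atom V E r a" | "agg_decomposable V E r a"
    using less.prems agg_atom_iff_not_decomposable by blast
  then show ?case
  proof cases
    case 1
    then have "0 \<in> agg_lengths V E r a"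
      unfolding agg_lengths_def by simp
    then show ?thesis by blast
  next
    case 2
    then have "1 \<in> agg_lengths V E r a"
      unfolding agg_lengths_def by (intro CollectI exI[of _ "\<lambda>_. a"]) simp
    then show ?thesis by blast
  next
    case 3
    then obtain c d where c: "c \<in> agglomerations V E r" and d: "d \<in> agglomerations V E r"
      and "c \<noteq> 0" and "d \<noteq> 0" and a: "a = c + d"
      unfolding agg_decomposable_def by blast
    have "finite (V \<union> E)"
      using G by (simp add: is_graph_def)
    have mass_less: "(\<Sum>x\<in>V \<union> E. p x) < (\<Sum>x\<in>V \<union> E. a x)"
      if "a = p + q" and "q \<in> agglomerations V E r" and "q \<noteq> 0" for p q
    proof -
      obtain x where "q x \<noteq> 0"
        using \<open>q \<noteq> 0\<close> by (auto simp: fun_eq_iff)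
      then have "x \<in> V \<union> E"
        using agglomerations_zero_outside[OF \<open>q \<in> agglomerations V E r\<close>] by force
      then have "q x \<le> (\<Sum>x\<in>V \<union> E. q x)"
        using \<open>finite (V \<union> E)\<close> by (intro member_le_sum) auto
      then show ?thesis
        using \<open>q x \<noteq> 0\<close> \<open>a = p + q\<close> by (simp add: sum.distrib)
    qed
    have "agg_lengths V E r c \<noteq> {}"
      by (rule less.hyps[OF mass_less[OF a d \<open>d \<noteq> 0\<close>] c])
    moreover have "agg_lengths V E r d \<noteq> {}"
      by (rule less.hyps[OF mass_less[OF _ c \<open>c \<noteq> 0\<close>] d]) (simp add: a add.commute)
    ultimately obtain m n where "m \<in> agg_lengths V E r c" and "n \<in> agg_lengths V E r d"
      by blast
    then show ?thesis
      using agg_lengths_add a by blast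
  qed
qed

theorem lemma4p18:
  fixes V E :: "'a set" and r :: "'a \<Rightarrow> 'a set" and a :: "'a \<Rightarrow> nat"
  assumes "is_graph V E r"
    and "a \<in> agglomerations V E r"
    and "supp_acyclic V E r a"
  shows "(\<exists>l. agg_lengths V E r a = {l} \<and>
           int l = (\<Sum>v\<in>V. int (a v)) - (\<Sum>e\<in>E. int (a e))) \<and>
         card (agg_lengths V E r a) = 1"
proof -
  obtain l where l: "l \<in> agg_lengths V E r a"
    using agg_lengths_nonempty[OF assms(1,2)] by blast
  have lengths: "int n = euler_char V E a" if "n \<in> agg_lengths V E r a" for n
    using agg_lengths_euler_char[OF assms(1,3) that] .
  have "agg_lengths V E r a = {l}"
  proof (intro equalityI subsetI)
    fix n assume "n \<in> agg_lengths V E r a"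
    then have "int n = int l"
      using lengths l by simp
    then show "n \<in> {l}"
      by simp
  qed (simp add: l)
  with lengths[OF l] show ?thesis
    unfolding euler_char_def by simp
qed

end
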